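(* Let $n\ge3$ and $r\in[3,n]$, and suppose $\tilde{\mathfrak b}_r=\mathfrak a\cdot\mathfrak b$ with $\mathfrak a,\mathfrak b\in\mathrm{Mon}(R)\setminus\{R\}$; let $\alpha=\operatorname{mdeg}(\mathfrak a)$, $\beta=\operatorname{mdeg}(\mathfrak b)$. Then: (1) $\alpha,\beta\ge1$ and $\alpha+\beta=a_{\{1\}\cup[3,r]}$; (2) $X^\alpha,Y^\alpha\in G(\mathfrak a)$ and $X^\beta,Y^\beta\in G(\mathfrak b)$; (3) $\alpha=a_{I_1}$ and $\beta=a_{I_2}$ for some $I_1,I_2\subseteq\{1\}\cup[3,r]$ with $I_1\cap I_2=\emptyset$.
   Context: Let $K$ be a field, $N\ge2$, $R=K[X_1,\dots,X_N]$, $X=X_1$, $Y=X_2$. $\mathrm{Mon}(R)$ is the monoid of nonzero monomial ideals of $R$ under ideal multiplication, with identity $R$. For a nonzero ideal $J$, $\operatorname{mdeg}(J)$ is the least $t$ such that $J$ contains a polynomial whose nonzero homogeneous component of smallest degree has degree $t$. For $J\in\mathrm{Mon}(R)$, $G(J)$ denotes the unique set of monomial generators of $J$ that is minimal with respect to divisibility. $[x,y]=\{z\in\mathbb Z:x\le z\le y\}$. For $i\in\mathbb N^+$, $\mathfrak b_i=\langle X^i,Y^i\rangle$. Fix an integer $n\ge 3$ and positive integers $a_1,\dots,a_{n+1}$ with (C1) $a_{n+1}=a_1+\dots+a_{n-1}+2a_n$ and (C2) $a_{i+1}>2(a_1+\dots+a_i)$ for all $i\in[1,n-1]$. For $I\subseteq[1,n+1]$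 put $a_I=\sum_{i\in I}a_i$ ($a_\emptyset=0$). For $r\in[3,n]$, $\tilde{\mathfrak b}_r$ is the ideal generated by $\mathfrak b_{a_1}\mathfrak b_{a_3}\mathfrak b_{a_4}\cdots\mathfrak b_{a_r}$ together with the monomial $X^{a_{[3,r]}-a_2}Y^{a_3-a_2}$. *)

theory Defs
  imports Main
begin

(* Monomial ideals of R = K[X_1,...,X_N] are modelled by their sets of monomials.
   A monomial X_1^{e 1} ... X_N^{e N} is its exponent vector e :: nat => nat,
   with e i = 0 for i outside {1..N}.  Functions are ordered pointwise, so
   e \<le> f  means  X^e divides X^f; \<lambda>i. e i + f i is the exponent of the product. *)

type_synonym expo = "nat \<Rightarrow> nat"

definition monoms :: "nat \<Rightarrow> expo set" where
  "monoms N = {e. \<forall>i. i \<notin> {1..N} \<longrightarrow> e i = 0}"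

definition gen :: "nat \<Rightarrow> expo set \<Rightarrow> expo set" where
  "gen N S = {f \<in> monoms N. \<exists>e\<in>S. e \<le> f}"

definition Mon :: "nat \<Rightarrow> expo set set" where
  "Mon N = {M. M \<noteq> {} \<and> M \<subseteq> monoms N \<and> (\<forall>e\<in>M. \<forall>f\<in>monoms N. e \<le> f \<longrightarrow> f \<in> M)}"

definition idmult :: "nat \<Rightarrow> expo set \<Rightarrow> expo set \<Rightarrow> expo set" where
  "idmult N A B = gen N {(\<lambda>i. e i + f i) | e f. e \<in> A \<and> f \<in> B}"

definition tdeg :: "nat \<Rightarrow> expo \<Rightarrow> nat" where
  "tdeg N e = sum e {1..N}"

(* mdeg of a monomial ideal: the least degree of a lowest homogeneous component of an
   element; for a monomial ideal this is the least degree of a monomial in it *)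
definition mdeg :: "nat \<Rightarrow> expo set \<Rightarrow> nat" where
  "mdeg N A = (LEAST t. \<exists>e\<in>A. tdeg N e = t)"

definition mingens :: "expo set \<Rightarrow> expo set" where
  "mingens A = {e \<in> A. \<forall>f\<in>A. f \<le> e \<longrightarrow> f = e}"

(* the monomial X^p Y^q with X = X_1, Y = X_2 *)
definition mXY :: "nat \<Rightarrow> nat \<Rightarrow> expo" where
  "mXY p q = (\<lambda>j. if j = 1 then p else if j = 2 then q else 0)"

definition bid :: "nat \<Rightarrow> nat \<Rightarrow> expo set" where
  "bid N i = gen N {mXY i 0, mXY 0 i}"

definition btilde :: "nat \<Rightarrow> (nat \<Rightarrow> nat) \<Rightarrow> nat \<Rightarrow> expo set" where
  "btilde N a r =
     gen N (foldr (\<lambda>i acc. idmult N (bid N (a i)) acc) (1 # [3..<r+1]) (monoms N)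
            \<union> {mXY (sum a {3..r} - a 2) (a 3 - a 2)})"

end

theory Submission
  imports Defs
begin

(* Let S = {1} \<union> [3,r] and D = a_S.  Every monomial of the product b_{a_1} b_{a_3} ... b_{a_r} is
   divisible by some X^{a_I} Y^{a_{S-I}}, so it has degree at least D in X and Y; by (C2) at i = 2
   the extra generator of tilde b_r has (X,Y)-degree above D.  Factoring X^D and Y^D through a b
   gives X^p1, Y^q1 in a and X^p2, Y^q2 in b with p1 + p2, q1 + q2 \<le> D, and the cross products
   X^p1 Y^q2, X^p2 Y^q1 have degree at least D: this forces q1 = p1, q2 = p2, p1 + p2 = D.
   Multiplying a by X^p2 shows that no monomial of a has (X,Y)-degree below p1, so X^p1 and Y^p1 are
   minimal generators of least degree; likewise for b.  Finally X^p1 Y^p2 lies in tilde b_r with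
   degree D, too small for the extra generator, hence p1 = a_I and p2 = a_{S-I}. *)

lemma mXY_apply [simp]: "mXY p q 1 = p" "mXY p q (Suc 0) = p" "mXY p q 2 = q"
  unfolding mXY_def by auto

lemma mXY_in_monoms: "N \<ge> 2 \<Longrightarrow> mXY p q \<in> monoms N"
  unfolding monoms_def mXY_def by auto

lemma mXY_add: "(\<lambda>i. mXY p q i + mXY p' q' i) = mXY (p + p') (q + q')"
  unfolding mXY_def by auto

lemma le_mXY:
  assumes "e \<le> mXY p q"
  shows "e = mXY (e 1) (e 2) \<and> e 1 \<le> p \<and> e 2 \<le> q"
proof -
  have le: "e j \<le> mXY p q j" for j
    using assms by (rule le_funD)
  have "e j = mXY (e 1) (e 2) j" for j
    using le[of j] by (cases "j = 1"; cases "j = 2") (auto simp: mXY_def)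
  then have "e = mXY (e 1) (e 2)" ..
  moreover have "e 1 \<le> p" "e 2 \<le> q"
    using le[of 1] le[of 2] by simp_all
  ultimately show ?thesis by blast
qed

lemma gen_memI: "e \<in> S \<Longrightarrow> e \<in> monoms N \<Longrightarrow> e \<in> gen N S"
  unfolding gen_def by auto

lemma mem_idmultI:
  "e \<in> A \<Longrightarrow> f \<in> B \<Longrightarrow> (\<lambda>i. e i + f i) \<in> monoms N \<Longrightarrow> (\<lambda>i. e i + f i) \<in> idmult N A B"
  unfolding idmult_def gen_def by blast

lemma Mon_subset_monoms: "A \<in> Mon N \<Longrightarrow> A \<subseteq> monoms N"
  unfolding Mon_def by simp

lemma Mon_mem_idmultI:
  assumes "A \<in> Mon N" "B \<in> Mon N" "e \<in> A" "f \<in> B"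
  shows "(\<lambda>i. e i + f i) \<in> idmult N A B"
proof (rule mem_idmultI[OF assms(3,4)])
  have "e \<in> monoms N" "f \<in> monoms N"
    using assms Mon_subset_monoms by blast+
  then show "(\<lambda>i. e i + f i) \<in> monoms N"
    unfolding monoms_def by simp
qed

lemma mem_idmultE: "g \<in> idmult N A B \<Longrightarrow> \<exists>e\<in>A. \<exists>f\<in>B. (\<lambda>i. e i + f i) \<le> g"
  unfolding idmult_def gen_def by blast

lemma mXY_mem_idmultE:
  assumes "mXY p q \<in> idmult N A B"
  obtains p1 q1 p2 q2 where "mXY p1 q1 \<in> A" "mXY p2 q2 \<in> B" "p1 + p2 \<le> p" "q1 + q2 \<le> q"
proof -
  obtain e f where "e \<in> A" "f \<in> B" and ef: "(\<lambda>i. e i + f i) \<le> mXY p q"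
    using mem_idmultE[OF assms] by blast
  moreover have "e \<le> mXY p q" "f \<le> mXY p q"
    using ef by (auto simp: le_fun_def intro: order_trans[rotated])
  then have "e = mXY (e 1) (e 2)" "f = mXY (f 1) (f 2)"
    using le_mXY by blast+
  moreover have "e 1 + f 1 \<le> p" "e 2 + f 2 \<le> q"
    using ef[THEN le_funD, of 1] ef[THEN le_funD, of 2] by simp_all
  ultimately show thesis
    using that[of "e 1" "e 2" "f 1" "f 2"] by metis
qed

lemma mXY_mem_proper_pos:
  assumes "A \<in> Mon N" "A \<noteq> monoms N" "mXY p q \<in> A"
  shows "0 < p + q"
proof (rule ccontr)
  assume "\<not> 0 < p + q"
  then have "mXY p q \<le> f" for f :: expo
    by (simp add: le_fun_def mXY_def)
  then have "monoms N \<subseteq> A"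
    using assms(1,3) unfolding Mon_def by blast
  with assms(1,2) show False
    using Mon_subset_monoms by blast
qed

lemma tdeg_split: "N \<ge> 2 \<Longrightarrow> tdeg N e = e 1 + e 2 + sum e {3..N}"
proof -
  assume "N \<ge> 2"
  then have "{1..N} = {1, 2} \<union> {3..N}" by auto
  then show ?thesis unfolding tdeg_def by (simp add: sum.union_disjoint)
qed

lemma tdeg_mXY: "N \<ge> 2 \<Longrightarrow> tdeg N (mXY p q) = p + q"
  by (simp add: tdeg_split) (simp add: mXY_def)

lemma mdeg_eqI:
  assumes "e \<in> A" "tdeg N e = d" "\<forall>f\<in>A. d \<le> tdeg N f"
  shows "mdeg N A = d"
  unfolding mdeg_def using assms by (intro Least_equality) auto

lemma mingens_subset: "mingens A \<subseteq> A"
  unfolding mingens_def by blast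

lemma mXY_mem_mingensI:
  assumes "mXY p q \<in> A" "\<forall>e\<in>A. p + q \<le> e 1 + e 2"
  shows "mXY p q \<in> mingens A"
  unfolding mingens_def
proof (intro CollectI conjI ballI impI assms(1))
  fix f assume "f \<in> A" "f \<le> mXY p q"
  then have f: "f = mXY (f 1) (f 2) \<and> f 1 \<le> p \<and> f 2 \<le> q" "p + q \<le> f 1 + f 2"
    using le_mXY assms(2) by simp_all
  then have "f 1 = p" "f 2 = q"
    by linarith+
  with f(1) show "f = mXY p q"
    by metis
qed

lemma mdeg_mingens_pure_powers:
  assumes "N \<ge> 2" "mXY p 0 \<in> A" "mXY 0 p \<in> A" "\<forall>e\<in>A. p \<le> e 1 + e 2"
  shows "mdeg N A = p \<and> mXY p 0 \<in> mingens A \<and> mXY 0 p \<in> mingens A"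
proof (intro conjI)
  have "p \<le> tdeg N e" if "e \<in> A" for e
    using assms(4) that tdeg_split[OF assms(1), of e] by fastforce
  then show "mdeg N A = p"
    using mdeg_eqI[OF assms(2)] tdeg_mXY[OF assms(1)] by simp
  show "mXY p 0 \<in> mingens A" "mXY 0 p \<in> mingens A"
    using assms(2-4) by (simp_all add: mXY_mem_mingensI)
qed

definition bprod :: "nat \<Rightarrow> (nat \<Rightarrow> nat) \<Rightarrow> nat list \<Rightarrow> expo set" where
  "bprod N a L = foldr (\<lambda>i acc. idmult N (bid N (a i)) acc) L (monoms N)"

lemma bprod_Nil [simp]: "bprod N a [] = monoms N"
  and bprod_Cons [simp]: "bprod N a (i # L) = idmult N (bid N (a i)) (bprod N a L)"
  by (simp_all add: bprod_def)

lemma mem_bid_cases: "g \<in> bid N c \<Longrightarrow> c \<le> g 1 \<or> c \<le> g 2"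
  unfolding bid_def gen_def by (auto dest: le_funD[of _ _ 1] le_funD[of _ _ 2])

lemma mem_bprod_split:
  assumes "distinct L" "g \<in> bprod N a L"
  shows "\<exists>I \<subseteq> set L. sum a I \<le> g 1 \<and> sum a (set L - I) \<le> g 2"
  using assms
proof (induction L arbitrary: g)
  case Nil
  then show ?case by simp
next
  case (Cons i L)
  have "g \<in> idmult N (bid N (a i)) (bprod N a L)"
    using Cons.prems(2) by simp
  then obtain e f where e: "e \<in> bid N (a i)" and f: "f \<in> bprod N a L"
    and ef: "(\<lambda>j. e j + f j) \<le> g"
    using mem_idmultE by blast
  obtain I where I: "I \<subseteq> set L" "sum a I \<le> f 1" "sum a (set L - I) \<le> f 2"
    using Cons.IH[OF _ f] Cons.prems(1) by auto
  have g: "e 1 + f 1 \<le> g 1" "e 2 + f 2 \<le> g 2"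
    using ef[THEN le_funD, of 1] ef[THEN le_funD, of 2] by simp_all
  have i: "i \<notin> set L" "i \<notin> I" "finite I"
    using Cons.prems(1) I(1) finite_subset by auto
  from mem_bid_cases[OF e] show ?case
  proof
    assume "a i \<le> e 1"
    moreover have "set (i # L) - insert i I = set L - I"
      using i(1) by auto
    ultimately show ?case
      using I g i by (intro exI[of _ "insert i I"]) auto
  next
    assume "a i \<le> e 2"
    moreover have "set (i # L) - I = insert i (set L - I)"
      using I(1) i(1) by auto
    ultimately show ?case
      using I g i by (intro exI[of _ I]) auto
  qed
qed

lemma mXY_mem_bprod:
  assumes "N \<ge> 2" "distinct L"
  shows "mXY (sum a (set L)) 0 \<in> bprod N a L \<and> mXY 0 (sum a (set L)) \<in> bprod N a L"
  using assms(2)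
proof (induction L)
  case Nil
  then show ?case using mXY_in_monoms[OF assms(1)] by simp
next
  case (Cons i L)
  have "mXY (a i) 0 \<in> bid N (a i)" "mXY 0 (a i) \<in> bid N (a i)"
    unfolding bid_def by (simp_all add: gen_memI mXY_in_monoms assms(1))
  then have "mXY (a i + c) 0 \<in> bprod N a (i # L)" "mXY 0 (a i + c) \<in> bprod N a (i # L)"
    if "mXY c 0 \<in> bprod N a L" "mXY 0 c \<in> bprod N a L" for c
    using mem_idmultI[OF _ that(1), of "mXY (a i) 0"] mem_idmultI[OF _ that(2), of "mXY 0 (a i)"]
    by (simp_all add: mXY_add mXY_in_monoms assms(1))
  then show ?case
    using Cons by simp
qed

lemma btilde_eq_gen_bprod:
  "btilde N a r = gen N (bprod N a (1 # [3..<r+1]) \<union> {mXY (sum a {3..r} - a 2) (a 3 - a 2)})"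
  unfolding btilde_def bprod_def ..

lemma mem_btilde_cases:
  assumes "g \<in> btilde N a r"
  shows "(\<exists>I \<subseteq> {1} \<union> {3..r}. sum a I \<le> g 1 \<and> sum a ({1} \<union> {3..r} - I) \<le> g 2)
    \<or> (sum a {3..r} - a 2 \<le> g 1 \<and> a 3 - a 2 \<le> g 2)"
proof -
  define L where "L = 1 # [3..<r+1]"
  obtain h where h: "h \<in> bprod N a L \<union> {mXY (sum a {3..r} - a 2) (a 3 - a 2)}" and "h \<le> g"
    using assms unfolding btilde_eq_gen_bprod gen_def L_def by blast
  then have hg: "h 1 \<le> g 1" "h 2 \<le> g 2"
    by (simp_all add: le_funD)
  show ?thesis
  proof (cases "h \<in> bprod N a L")
    case True
    moreover have "distinct L" "set L = {1} \<union> {3..r}"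
      unfolding L_def by auto
    ultimately obtain I where "I \<subseteq> {1} \<union> {3..r}" "sum a I \<le> h 1" "sum a ({1} \<union> {3..r} - I) \<le> h 2"
      using mem_bprod_split by metis
    then show ?thesis
      using hg by (intro disjI1) (blast intro: le_trans)
  next
    case False
    then show ?thesis
      using h hg by simp
  qed
qed

lemma mXY_mem_btilde:
  assumes "N \<ge> 2"
  shows "mXY (sum a ({1} \<union> {3..r})) 0 \<in> btilde N a r \<and> mXY 0 (sum a ({1} \<union> {3..r})) \<in> btilde N a r"
proof -
  have "set (1 # [3..<r+1]) = {1} \<union> {3..r}" "distinct (1 # [3..<r+1])"
    by auto
  then show ?thesis
    using mXY_mem_bprod[OF assms, of "1 # [3..<r+1]" a]
    unfolding btilde_eq_gen_bprod by (simp add: gen_memI mXY_in_monoms assms)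
qed

lemma btilde_extra_generator_degree:
  fixes a :: "nat \<Rightarrow> nat"
  assumes "3 \<le> r" "2 * (a 1 + a 2) < a 3"
  shows "sum a ({1} \<union> {3..r}) < (sum a {3..r} - a 2) + (a 3 - a 2)"
proof -
  have "a 3 \<le> sum a {3..r}"
    using assms(1) by (intro member_le_sum) auto
  moreover have "sum a ({1} \<union> {3..r}) = a 1 + sum a {3..r}"
    by simp
  ultimately show ?thesis
    using assms(2) by arith
qed

lemma btilde_XY_degree_ge:
  assumes "3 \<le> r" "2 * (a 1 + a 2) < a 3" "g \<in> btilde N a r"
  shows "sum a ({1} \<union> {3..r}) \<le> g 1 + g 2"
  using mem_btilde_cases[OF assms(3)]
proof
  assume "\<exists>I \<subseteq> {1} \<union> {3..r}. sum a I \<le> g 1 \<and> sum a ({1} \<union> {3..r} - I) \<le> g 2"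
  then obtain I where "I \<subseteq> {1} \<union> {3..r}" "sum a I \<le> g 1" "sum a ({1} \<union> {3..r} - I) \<le> g 2"
    by blast
  then show ?thesis
    using sum.subset_diff[of I "{1} \<union> {3..r}" a] by simp
next
  assume "sum a {3..r} - a 2 \<le> g 1 \<and> a 3 - a 2 \<le> g 2"
  then show ?thesis
    using btilde_extra_generator_degree[OF assms(1,2)] by linarith
qed

lemma btilde_XY_degree_eq:
  assumes "3 \<le> r" "2 * (a 1 + a 2) < a 3" "g \<in> btilde N a r"
    and "g 1 + g 2 \<le> sum a ({1} \<union> {3..r})"
  shows "\<exists>I \<subseteq> {1} \<union> {3..r}. g 1 = sum a I \<and> g 2 = sum a ({1} \<union> {3..r} - I)"
  using mem_btilde_cases[OF assms(3)]
proof
  assume "\<exists>I \<subseteq> {1} \<union> {3..r}. sum a I \<le> g 1 \<and> sum a ({1} \<union> {3..r} - I) \<le> g 2"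
  then obtain I where I: "I \<subseteq> {1} \<union> {3..r}" "sum a I \<le> g 1" "sum a ({1} \<union> {3..r} - I) \<le> g 2"
    by blast
  have "sum a ({1} \<union> {3..r}) = sum a ({1} \<union> {3..r} - I) + sum a I"
    using I(1) by (simp add: sum.subset_diff)
  then have "g 1 = sum a I" "g 2 = sum a ({1} \<union> {3..r} - I)"
    using I(2,3) assms(4) by linarith+
  then show ?thesis
    using I(1) by blast
next
  assume "sum a {3..r} - a 2 \<le> g 1 \<and> a 3 - a 2 \<le> g 2"
  then show ?thesis
    using btilde_extra_generator_degree[OF assms(1,2)] assms(4) by linarith
qed

lemma pure_powers_in_factors:
  assumes A: "A \<in> Mon N" and B: "B \<in> Mon N"
    and XD: "mXY D 0 \<in> idmult N A B" and YD: "mXY 0 D \<in> idmult N A B"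
    and deg: "\<forall>g\<in>idmult N A B. D \<le> g 1 + g 2"
  obtains p q where "p + q = D" "mXY p 0 \<in> A" "mXY 0 p \<in> A" "mXY q 0 \<in> B" "mXY 0 q \<in> B"
    "\<forall>e\<in>A. p \<le> e 1 + e 2" "\<forall>f\<in>B. q \<le> f 1 + f 2"
proof -
  have cross: "D \<le> e 1 + e 2 + f 1 + f 2" if "e \<in> A" "f \<in> B" for e f
    using deg Mon_mem_idmultI[OF A B that] by fastforce
  obtain p1 p2 where X: "mXY p1 0 \<in> A" "mXY p2 0 \<in> B" "p1 + p2 \<le> D"
    using XD by (rule mXY_mem_idmultE) simp
  obtain q1 q2 where Y: "mXY 0 q1 \<in> A" "mXY 0 q2 \<in> B" "q1 + q2 \<le> D"
    using YD by (rule mXY_mem_idmultE) simp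
  have "D \<le> p1 + q2" "D \<le> q1 + p2"
    using cross[OF X(1) Y(2)] cross[OF Y(1) X(2)] by simp_all
  then have "q1 = p1" "q2 = p2" "p1 + p2 = D"
    using X(3) Y(3) by linarith+
  show thesis
  proof (rule that)
    show "\<forall>e\<in>A. p1 \<le> e 1 + e 2" "\<forall>f\<in>B. p2 \<le> f 1 + f 2"
      using cross[OF _ X(2)] cross[OF X(1)] \<open>p1 + p2 = D\<close> by fastforce+
  qed (use X Y \<open>q1 = p1\<close> \<open>q2 = p2\<close> \<open>p1 + p2 = D\<close> in simp_all)
qed

lemma mdeg_mingens_of_factors:
  assumes "N \<ge> 2" "A \<in> Mon N" "B \<in> Mon N"
    and "mXY D 0 \<in> idmult N A B" "mXY 0 D \<in> idmult N A B"
    and "\<forall>g\<in>idmult N A B. D \<le> g 1 + g 2"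
  shows "mdeg N A + mdeg N B = D
    \<and> mXY (mdeg N A) 0 \<in> mingens A \<and> mXY 0 (mdeg N A) \<in> mingens A
    \<and> mXY (mdeg N B) 0 \<in> mingens B \<and> mXY 0 (mdeg N B) \<in> mingens B"
proof -
  obtain p q where pq: "p + q = D" "mXY p 0 \<in> A" "mXY 0 p \<in> A" "mXY q 0 \<in> B" "mXY 0 q \<in> B"
    "\<forall>e\<in>A. p \<le> e 1 + e 2" "\<forall>f\<in>B. q \<le> f 1 + f 2"
    by (rule pure_powers_in_factors[OF assms(2-6)])
  have "mdeg N A = p \<and> mXY p 0 \<in> mingens A \<and> mXY 0 p \<in> mingens A"
    by (rule mdeg_mingens_pure_powers[OF assms(1) pq(2,3,6)])
  moreover have "mdeg N B = q \<and> mXY q 0 \<in> mingens B \<and> mXY 0 q \<in> mingens B"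
    by (rule mdeg_mingens_pure_powers[OF assms(1) pq(4,5,7)])
  ultimately show ?thesis
    using pq(1) by simp
qed

lemma mdeg_mingens_of_btilde_factors:
  assumes "N \<ge> 2" "3 \<le> r" "2 * (a 1 + a 2) < a 3"
    and "A \<in> Mon N" "B \<in> Mon N" "btilde N a r = idmult N A B"
  shows "mdeg N A + mdeg N B = sum a ({1} \<union> {3..r})
    \<and> mXY (mdeg N A) 0 \<in> mingens A \<and> mXY 0 (mdeg N A) \<in> mingens A
    \<and> mXY (mdeg N B) 0 \<in> mingens B \<and> mXY 0 (mdeg N B) \<in> mingens B"
proof (rule mdeg_mingens_of_factors[OF assms(1,4,5)])
  show "mXY (sum a ({1} \<union> {3..r})) 0 \<in> idmult N A B" "mXY 0 (sum a ({1} \<union> {3..r})) \<in> idmult N A B"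
    using mXY_mem_btilde[OF assms(1), of a r] unfolding assms(6) by blast+
  show "\<forall>g\<in>idmult N A B. sum a ({1} \<union> {3..r}) \<le> g 1 + g 2"
    using btilde_XY_degree_ge[OF assms(2,3), of _ N] unfolding assms(6) by blast
qed

theorem lemma4p12:
  fixes N n r :: nat and a :: "nat \<Rightarrow> nat" and A B :: "expo set"
  assumes "N \<ge> 2" and "n \<ge> 3"
    and "\<forall>i\<in>{1..n+1}. a i > 0"
    and C1: "a (n+1) = sum a {1..n-1} + 2 * a n"
    and C2: "\<forall>i\<in>{1..n-1}. a (i+1) > 2 * sum a {1..i}"
    and "r \<in> {3..n}"
    and "A \<in> Mon N" and "B \<in> Mon N" and "A \<noteq> monoms N" and "B \<noteq> monoms N"
    and "btilde N a r = idmult N A B"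
  shows "mdeg N A \<ge> 1 \<and> mdeg N B \<ge> 1 \<and> mdeg N A + mdeg N B = sum a ({1} \<union> {3..r})
    \<and> mXY (mdeg N A) 0 \<in> mingens A \<and> mXY 0 (mdeg N A) \<in> mingens A
    \<and> mXY (mdeg N B) 0 \<in> mingens B \<and> mXY 0 (mdeg N B) \<in> mingens B
    \<and> (\<exists>I1 I2. I1 \<subseteq> {1} \<union> {3..r} \<and> I2 \<subseteq> {1} \<union> {3..r} \<and> I1 \<inter> I2 = {}
          \<and> mdeg N A = sum a I1 \<and> mdeg N B = sum a I2)"
proof -
  note J = \<open>btilde N a r = idmult N A B\<close>
  have r: "3 \<le> r"
    using \<open>r \<in> {3..n}\<close> by simp
  have "(2::nat) \<in> {1..n-1}"
    using \<open>n \<ge> 3\<close> by simp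
  then have "2 * sum a {1..2} < a (2 + 1)"
    using C2 by blast
  then have a3: "2 * (a 1 + a 2) < a 3"
    by (simp add: numeral_2_eq_2 numeral_3_eq_3)
  have fac: "mdeg N A + mdeg N B = sum a ({1} \<union> {3..r})
    \<and> mXY (mdeg N A) 0 \<in> mingens A \<and> mXY 0 (mdeg N A) \<in> mingens A
    \<and> mXY (mdeg N B) 0 \<in> mingens B \<and> mXY 0 (mdeg N B) \<in> mingens B"
    using mdeg_mingens_of_btilde_factors[OF \<open>N \<ge> 2\<close> r a3 \<open>A \<in> Mon N\<close> \<open>B \<in> Mon N\<close> J] .
  then have XA: "mXY (mdeg N A) 0 \<in> A" and YB: "mXY 0 (mdeg N B) \<in> B"
    using mingens_subset by blast+
  have "mXY (mdeg N A) (mdeg N B) \<in> btilde N a r"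
    using Mon_mem_idmultI[OF \<open>A \<in> Mon N\<close> \<open>B \<in> Mon N\<close> XA YB] unfolding J by (simp add: mXY_add)
  then obtain I where I: "I \<subseteq> {1} \<union> {3..r}"
    "mdeg N A = sum a I" "mdeg N B = sum a ({1} \<union> {3..r} - I)"
    using btilde_XY_degree_eq[OF r a3, of "mXY (mdeg N A) (mdeg N B)"] fac by auto
  then have "\<exists>I1 I2. I1 \<subseteq> {1} \<union> {3..r} \<and> I2 \<subseteq> {1} \<union> {3..r} \<and> I1 \<inter> I2 = {}
      \<and> mdeg N A = sum a I1 \<and> mdeg N B = sum a I2"
    by (intro exI[of _ I] exI[of _ "{1} \<union> {3..r} - I"]) auto
  moreover have "0 < mdeg N A" "0 < mdeg N B"
    using mXY_mem_proper_pos[OF \<open>A \<in> Mon N\<close> \<open>A \<noteq> monoms N\<close> XA]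
      mXY_mem_proper_pos[OF \<open>B \<in> Mon N\<close> \<open>B \<noteq> monoms N\<close> YB] by simp_all
  ultimately show ?thesis
    using fac by (intro conjI) simp_all
qed

end
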